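(* Let $x\in\mathcal{T}$ and let $x^*$ be its condensed form. Then the equivalence class of $x$ under warping identification is $$[x] := \{y\in\mathcal{T} : \delta(x,y)=0\} = \{y\in\mathcal{T} : y \succ x^*\}.$$
   Context: A time series of length $n\ge1$ is a finite real sequence $x=(x_1,\dots,x_n)$; $\mathcal{T}$ is the set of all time series of finite length. For $m,n\in\mathbb{N}$, a warping path of order $m\times n$ is a sequence $p=(p_1,\dots,p_\ell)$ of points in $[m]\times[n]$ ($[n]=\{1,\dots,n\}$) with $p_1=(1,1)$, $p_\ell=(m,n)$, $p_{l+1}-p_l\in\{(1,0),(0,1),(1,1)\}$; $\mathcal{P}_{m,n}$ is the set of these. The dtw-distance of $x$ (length $m$) and $y$ (length $n$) is $\delta(x,y)=\min_{p\in\mathcal{P}_{m,n}}\big(\sum_{(i,j)\in p}(x_i-y_j)^2\big)^{1/2}$. A time series $x'$ is an expansion of $x=(x_1,\dots,x_n)$, written $x'\succ x$ (equivalently $x\prec x'$, $x$ is a compression of $x'$), if there are integers $\alpha_1,\dots,\alpha_n\ge1$ such that $x'=(\underbrace{x_1,\dots,x_1}_{\alpha_1},\dots,\underbrace{x_n,\dots,x_n}_{\alpha_n})$. A time series is irreducible if no two consecutive elements are equal (equivalently, it is not an expansion of a shorter time series). The condensed form $x^*$ of $x$ is the (unique) irreducible time series with $x\succ x^*$, obtained by collapsing each maximal run of consecutive equal values to a single element. *)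

theory Defs
  imports Complex_Main
begin

text \<open>Time series are nonempty lists of reals; the element x_i (1-based) is x ! (i-1).\<close>

definition time_series :: "real list \<Rightarrow> bool" where
  "time_series x \<longleftrightarrow> x \<noteq> []"

definition warping_path :: "nat \<Rightarrow> nat \<Rightarrow> (nat \<times> nat) list \<Rightarrow> bool" where
  "warping_path m n p \<longleftrightarrow>
     p \<noteq> [] \<and> hd p = (1, 1) \<and> last p = (m, n) \<and>
     (\<forall>(i, j) \<in> set p. 1 \<le> i \<and> i \<le> m \<and> 1 \<le> j \<and> j \<le> n) \<and>
     (\<forall>l. Suc l < length p \<longrightarrow>
        (fst (p ! Suc l), snd (p ! Suc l)) \<in>
          {(fst (p ! l) + 1, snd (p ! l)), (fst (p ! l), snd (p ! l) + 1),
           (fst (p ! l) + 1, snd (p ! l) + 1)})"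

definition warping_paths :: "nat \<Rightarrow> nat \<Rightarrow> (nat \<times> nat) list set" where
  "warping_paths m n = {p. warping_path m n p}"

definition path_cost :: "real list \<Rightarrow> real list \<Rightarrow> (nat \<times> nat) list \<Rightarrow> real" where
  "path_cost x y p = (\<Sum>(i, j) \<leftarrow> p. (x ! (i - 1) - y ! (j - 1))^2)"

definition dtw :: "real list \<Rightarrow> real list \<Rightarrow> real" where
  "dtw x y = Min ((\<lambda>p. sqrt (path_cost x y p)) ` warping_paths (length x) (length y))"

definition expansion :: "real list \<Rightarrow> real list \<Rightarrow> bool" where
  "expansion x' x \<longleftrightarrow>
     (\<exists>\<alpha> :: nat list. length \<alpha> = length x \<and> (\<forall>a \<in> set \<alpha>. a \<ge> 1) \<and>
        x' = concat (map2 replicate \<alpha> x))"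

definition condensed :: "real list \<Rightarrow> real list" where
  "condensed x = remdups_adj x"

end

theory Submission
  imports Defs
begin

(*
  A zero-cost warping path only pairs equal values. Each of its two coordinate
  projections runs through the indices of one series in steps of 0 or 1, so reading
  values along the path yields an expansion of x and, at the same time, an expansion
  of y; hence x and y have the same condensed form. Conversely, when the condensed
  forms agree, a zero-cost path is built front to back: repeat the head of whichever
  series starts with a repeated value, otherwise advance diagonally. Finally y is an
  expansion of x* exactly when y* = x*.
*)

lemma remdups_adj_idem [simp]: "remdups_adj (remdups_adj xs) = remdups_adj xs"
  using distinct_adj_altdef distinct_adj_remdups_adj by blast

lemma remdups_adj_Cons_cong:
  "remdups_adj xs = remdups_adj ys \<Longrightarrow> remdups_adj (c # xs) = remdups_adj (c # ys)"
  by (simp add: remdups_adj_Cons)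

lemma remdups_adj_replicate_append:
  "remdups_adj (replicate (Suc k) c @ xs) = remdups_adj (c # xs)"
  by (induction k) auto

lemma remdups_adj_expansion:
  assumes "expansion x' x"
  shows "remdups_adj x' = remdups_adj x"
proof -
  obtain \<alpha> where "length \<alpha> = length x" "\<forall>a \<in> set \<alpha>. a \<ge> 1" "x' = concat (map2 replicate \<alpha> x)"
    using assms unfolding expansion_def by blast
  then show ?thesis
  proof (induction x arbitrary: \<alpha> x')
    case (Cons c x)
    then obtain k \<alpha>' where \<alpha>: "\<alpha> = Suc k # \<alpha>'"
      by (cases \<alpha>) (auto simp: Suc_le_eq gr0_conv_Suc)
    have "x' = replicate (Suc k) c @ concat (map2 replicate \<alpha>' x)"
      using Cons.prems \<alpha> by simp
    then have "remdups_adj x' = remdups_adj (c # concat (map2 replicate \<alpha>' x))"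
      by (simp only: remdups_adj_replicate_append)
    also have "\<dots> = remdups_adj (c # x)"
      using Cons.prems \<alpha> by (intro remdups_adj_Cons_cong Cons.IH) auto
    finally show ?case .
  qed simp
qed

lemma expansion_Cons: "expansion x' x \<Longrightarrow> expansion (c # x') (c # x)"
proof -
  assume "expansion x' x"
  then obtain \<alpha> where "length \<alpha> = length x" "\<forall>a \<in> set \<alpha>. a \<ge> 1"
    "x' = concat (map2 replicate \<alpha> x)"
    unfolding expansion_def by blast
  then show "expansion (c # x') (c # x)"
    unfolding expansion_def by (intro exI[of _ "1 # \<alpha>"]) auto
qed

lemma expansion_Cons_repeat: "expansion x' (c # x) \<Longrightarrow> expansion (c # x') (c # x)"
proof -
  assume "expansion x' (c # x)"
  then obtain k \<alpha> where "length \<alpha> = length x" "\<forall>a \<in> set (k # \<alpha>). a \<ge> 1"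
    "x' = concat (map2 replicate (k # \<alpha>) (c # x))"
    unfolding expansion_def by (auto simp: length_Suc_conv)
  then show "expansion (c # x') (c # x)"
    unfolding expansion_def by (intro exI[of _ "Suc k # \<alpha>"]) auto
qed

lemma expansion_remdups_adj: "expansion x (remdups_adj x)"
proof (induction x rule: remdups_adj.induct)
  case 1
  then show ?case by (simp add: expansion_def)
next
  case (2 c)
  then show ?case by (auto simp: expansion_def intro: exI[of _ "[1]"])
next
  case (3 c d x)
  show ?case
  proof (cases "c = d")
    case True
    then show ?thesis
      using expansion_Cons_repeat 3(1) remdups_adj_Cons_alt[of d x] by (metis remdups_adj.simps(3))
  next
    case False
    then show ?thesis using expansion_Cons 3(2) by simp
  qed
qed

lemma expansion_remdups_adj_iff:
  "expansion y (remdups_adj x) \<longleftrightarrow> remdups_adj y = remdups_adj x"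
proof
  show "expansion y (remdups_adj x) \<Longrightarrow> remdups_adj y = remdups_adj x"
    using remdups_adj_expansion by fastforce
  show "remdups_adj y = remdups_adj x \<Longrightarrow> expansion y (remdups_adj x)"
    using expansion_remdups_adj by metis
qed

lemma successively_stutter_hd_le_last:
  "successively (\<lambda>i i'. i' = i \<or> i' = Suc i) s \<Longrightarrow> s \<noteq> [] \<Longrightarrow> hd s \<le> last s"
  by (induction s) (auto simp: successively_Cons)

lemma remdups_adj_map_stutter:
  assumes "successively (\<lambda>i i'. i' = i \<or> i' = Suc i) (i # s)"
  shows "remdups_adj (map f (i # s)) = remdups_adj (map f [i..<Suc (last (i # s))])"
  using assms
proof (induction s arbitrary: i)
  case (Cons j s)
  have step: "j = i \<or> j = Suc i" and rest: "successively (\<lambda>i i'. i' = i \<or> i' = Suc i) (j # s)"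
    using Cons.prems by auto
  have IH: "remdups_adj (map f (j # s)) = remdups_adj (map f [j..<Suc (last (j # s))])"
    using Cons.IH[OF rest] .
  from step show ?case
  proof
    assume "j = i"
    then show ?thesis
      using IH by simp
  next
    assume j: "j = Suc i"
    have "j \<le> last (j # s)"
      using successively_stutter_hd_le_last[OF rest] by simp
    then have "[i..<Suc (last (j # s))] = i # [j..<Suc (last (j # s))]"
      using j by (simp add: upt_conv_Cons)
    then show ?thesis
      using remdups_adj_Cons_cong[OF IH, of "f i"] by simp
  qed
qed simp

lemma map_nth_pred_upt: "map (\<lambda>i. x ! (i - 1)) [1..<Suc (length x)] = x"
  by (rule nth_equalityI) (auto simp del: upt_Suc)

lemma remdups_adj_map_stutter_nth:
  assumes "successively (\<lambda>i i'. i' = i \<or> i' = Suc i) s" "s \<noteq> []" "hd s = 1" "last s = length x"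
  shows "remdups_adj (map (\<lambda>i. x ! (i - 1)) s) = remdups_adj x"
proof -
  obtain s' where s: "s = 1 # s'"
    using assms(2,3) by (metis list.collapse)
  have "remdups_adj (map (\<lambda>i. x ! (i - 1)) s) = remdups_adj (map (\<lambda>i. x ! (i - 1)) [1..<Suc (length x)])"
    using remdups_adj_map_stutter[of 1 s' "\<lambda>i. x ! (i - 1)"] assms(1,4) s by (simp del: upt_Suc)
  then show ?thesis
    by (simp only: map_nth_pred_upt)
qed

lemma warping_path_stepD:
  assumes "warping_path m n p" "Suc l < length p"
  shows "p ! Suc l \<in> {(fst (p ! l) + 1, snd (p ! l)), (fst (p ! l), snd (p ! l) + 1),
                       (fst (p ! l) + 1, snd (p ! l) + 1)}"
  using assms unfolding warping_path_def by auto

lemma warping_path_memD: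
  "warping_path m n p \<Longrightarrow> (i, j) \<in> set p \<Longrightarrow> 1 \<le> i \<and> i \<le> m \<and> 1 \<le> j \<and> j \<le> n"
  unfolding warping_path_def by blast

lemma warping_path_fst_steps:
  "warping_path m n p \<Longrightarrow> successively (\<lambda>i i'. i' = i \<or> i' = Suc i) (map fst p)"
  by (auto simp: successively_conv_nth dest: warping_path_stepD)

lemma warping_path_snd_steps:
  "warping_path m n p \<Longrightarrow> successively (\<lambda>j j'. j' = j \<or> j' = Suc j) (map snd p)"
  by (auto simp: successively_conv_nth dest: warping_path_stepD)

lemma warping_path_distinct:
  assumes "warping_path m n p"
  shows "distinct p"
proof -
  have "successively (<) (map (\<lambda>(i, j). i + j) p)"
    unfolding successively_conv_nth
    using warping_path_stepD[OF assms] by (fastforce simp: split_beta)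
  then have "sorted_wrt (<) (map (\<lambda>(i, j). i + j) p)"
    by (simp add: successively_conv_sorted_wrt)
  then show ?thesis
    by (simp add: strict_sorted_iff distinct_map)
qed

lemma finite_warping_paths: "finite (warping_paths m n)"
proof (rule finite_subset)
  show "warping_paths m n \<subseteq> {p. set p \<subseteq> {1..m} \<times> {1..n} \<and> distinct p}"
    using warping_path_distinct by (auto simp: warping_paths_def warping_path_def)
qed (simp add: finite_subset_distinct)

lemma warping_path_Cons_shift:
  assumes "warping_path m n p" and "(di, dj) \<in> {(1, 0), (0, 1), (1, 1)}"
  shows "warping_path (m + di) (n + dj) ((1, 1) # map (\<lambda>(i, j). (i + di, j + dj)) p)"
proof -
  let ?q = "(1, 1) # map (\<lambda>(i, j). (i + di, j + dj)) p"
  have p: "p \<noteq> []" "p ! 0 = (1, 1)" "last p = (m, n)"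
    and bounds: "\<forall>(i, j) \<in> set p. 1 \<le> i \<and> i \<le> m \<and> 1 \<le> j \<and> j \<le> n"
    using assms(1) by (auto simp: warping_path_def hd_conv_nth)
  have "Suc l < length ?q \<Longrightarrow> ?q ! Suc l \<in> {(fst (?q ! l) + 1, snd (?q ! l)),
          (fst (?q ! l), snd (?q ! l) + 1), (fst (?q ! l) + 1, snd (?q ! l) + 1)}" for l
    using assms(2) p(2) warping_path_stepD[OF assms(1), of "l - 1"]
    by (cases l) (auto simp: split_beta)
  moreover have "last ?q = (m + di, n + dj)"
    using p by (simp add: last_map)
  moreover have "\<forall>(i, j) \<in> set ?q. 1 \<le> i \<and> i \<le> m + di \<and> 1 \<le> j \<and> j \<le> n + dj"
    using bounds hd_in_set[OF p(1)] p(2) assms(2) by (auto simp: hd_conv_nth)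
  ultimately show ?thesis
    unfolding warping_path_def by auto
qed

definition matching_path :: "real list \<Rightarrow> real list \<Rightarrow> (nat \<times> nat) list \<Rightarrow> bool" where
  "matching_path x y p \<longleftrightarrow>
     warping_path (length x) (length y) p \<and> (\<forall>(i, j) \<in> set p. x ! (i - 1) = y ! (j - 1))"

lemma matching_path_nonempty_hd_eq:
  assumes "matching_path x y p"
  shows "x \<noteq> [] \<and> y \<noteq> [] \<and> hd x = hd y"
proof -
  have w: "warping_path (length x) (length y) p"
    using assms by (simp add: matching_path_def)
  then have "(1, 1) \<in> set p"
    by (metis hd_in_set warping_path_def)
  moreover from this have "x \<noteq> [] \<and> y \<noteq> []"
    using warping_path_memD[OF w] by fastforce
  ultimately show ?thesis
    using assms by (auto simp: matching_path_def hd_conv_nth)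
qed

lemma matching_path_Cons_left:
  assumes "matching_path x y p"
  shows "matching_path (hd x # x) y ((1, 1) # map (\<lambda>(i, j). (i + 1, j + 0)) p)"
proof -
  have w: "warping_path (length x) (length y) p"
    and match: "\<forall>(i, j) \<in> set p. x ! (i - 1) = y ! (j - 1)"
    using assms by (auto simp: matching_path_def)
  have "(hd x # x) ! i = y ! (j - 1)" if "(i, j) \<in> set p" for i j
    using match that warping_path_memD[OF w that] by (auto simp: nth_Cons')
  then show ?thesis
    using warping_path_Cons_shift[OF w, of 1 0] matching_path_nonempty_hd_eq[OF assms]
    by (auto simp: matching_path_def hd_conv_nth)
qed

lemma matching_path_Cons_right:
  assumes "matching_path x y p"
  shows "matching_path x (hd y # y) ((1, 1) # map (\<lambda>(i, j). (i + 0, j + 1)) p)"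
proof -
  have w: "warping_path (length x) (length y) p"
    and match: "\<forall>(i, j) \<in> set p. x ! (i - 1) = y ! (j - 1)"
    using assms by (auto simp: matching_path_def)
  have "x ! (i - 1) = (hd y # y) ! j" if "(i, j) \<in> set p" for i j
    using match that warping_path_memD[OF w that] by (auto simp: nth_Cons')
  then show ?thesis
    using warping_path_Cons_shift[OF w, of 0 1] matching_path_nonempty_hd_eq[OF assms]
    by (auto simp: matching_path_def hd_conv_nth)
qed

lemma matching_path_Cons_Cons:
  assumes "matching_path x y p"
  shows "matching_path (c # x) (c # y) ((1, 1) # map (\<lambda>(i, j). (i + 1, j + 1)) p)"
proof -
  have w: "warping_path (length x) (length y) p"
    and match: "\<forall>(i, j) \<in> set p. x ! (i - 1) = y ! (j - 1)"
    using assms by (auto simp: matching_path_def)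
  have "(c # x) ! i = (c # y) ! j" if "(i, j) \<in> set p" for i j
    using match that warping_path_memD[OF w that] by (auto simp: nth_Cons')
  then show ?thesis
    using warping_path_Cons_shift[OF w, of 1 1] by (auto simp: matching_path_def)
qed

lemma matching_path_singleton: "matching_path [c] [c] [(1, 1)]"
  by (simp add: matching_path_def warping_path_def)

lemma matching_path_exists:
  "x \<noteq> [] \<Longrightarrow> y \<noteq> [] \<Longrightarrow> remdups_adj x = remdups_adj y \<Longrightarrow> \<exists>p. matching_path x y p"
proof (induction "length x + length y" arbitrary: x y rule: less_induct)
  case less
  obtain a x' b y' where x: "x = a # x'" and y: "y = b # y'"
    using less.prems by (meson neq_Nil_conv)
  have "a = b"
    using less.prems(3) x y by (metis hd_remdups_adj list.sel(1))
  consider (left) "x' \<noteq> []" "hd x' = a" | (right) "y' \<noteq> []" "hd y' = b"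
    | (step) "x' = [] \<or> hd x' \<noteq> a" "y' = [] \<or> hd y' \<noteq> b"
    by blast
  then show ?case
  proof cases
    case left
    then have "remdups_adj x' = remdups_adj y"
      using less.prems(3) x by (cases x') auto
    then obtain p where "matching_path x' y p"
      using less.hyps[of x' y] left less.prems(2) x by auto
    then show ?thesis
      using matching_path_Cons_left left x by metis
  next
    case right
    then have "remdups_adj x = remdups_adj y'"
      using less.prems(3) y by (cases y') auto
    then obtain p where "matching_path x y' p"
      using less.hyps[of x y'] right less.prems(1) y by auto
    then show ?thesis
      using matching_path_Cons_right right y by metis
  next
    case step
    then have eq: "remdups_adj x' = remdups_adj y'"
      using less.prems(3) x y \<open>a = b\<close> by (cases x'; cases y') auto
    show ?thesis
    proof (cases "x' = []")
      case True
      then have "y' = []"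
        using eq by (metis remdups_adj_Nil_iff)
      then show ?thesis
        using True x y \<open>a = b\<close> matching_path_singleton by auto
    next
      case False
      moreover from this have "y' \<noteq> []"
        using eq by (metis remdups_adj_Nil_iff)
      ultimately obtain p where "matching_path x' y' p"
        using less.hyps[of x' y'] eq x y by auto
      then show ?thesis
        using matching_path_Cons_Cons x y \<open>a = b\<close> by metis
    qed
  qed
qed

lemma matching_path_remdups_adj_eq:
  assumes "matching_path x y p"
  shows "remdups_adj x = remdups_adj y"
proof -
  have w: "warping_path (length x) (length y) p"
    and match: "\<forall>(i, j) \<in> set p. x ! (i - 1) = y ! (j - 1)"
    using assms by (auto simp: matching_path_def)
  have p: "p \<noteq> []" "hd p = (1, 1)" "last p = (length x, length y)"
    using w by (auto simp: warping_path_def)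
  have "remdups_adj x = remdups_adj (map (\<lambda>i. x ! (i - 1)) (map fst p))"
    using remdups_adj_map_stutter_nth[OF warping_path_fst_steps[OF w], of x] p
    by (simp add: hd_map last_map)
  also have "map (\<lambda>i. x ! (i - 1)) (map fst p) = map (\<lambda>j. y ! (j - 1)) (map snd p)"
    using match by auto
  also have "remdups_adj \<dots> = remdups_adj y"
    using remdups_adj_map_stutter_nth[OF warping_path_snd_steps[OF w], of y] p
    by (simp add: hd_map last_map)
  finally show ?thesis .
qed

lemma path_cost_nonneg: "0 \<le> path_cost x y p"
  unfolding path_cost_def by (rule sum_list_nonneg) auto

lemma path_cost_eq_0_iff: "path_cost x y p = 0 \<longleftrightarrow> (\<forall>(i, j) \<in> set p. x ! (i - 1) = y ! (j - 1))"
  unfolding path_cost_def by (subst sum_list_nonneg_eq_0_iff) auto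

lemma dtw_eq_0_iff:
  assumes "x \<noteq> []" "y \<noteq> []"
  shows "dtw x y = 0 \<longleftrightarrow> (\<exists>p. matching_path x y p)"
proof -
  let ?W = "warping_paths (length x) (length y)"
  let ?C = "(\<lambda>p. sqrt (path_cost x y p)) ` ?W"
  have fin: "finite ?C"
    using finite_warping_paths by simp
  obtain p where "matching_path (replicate (length x) 0) (replicate (length y) 0) p"
    using matching_path_exists[of "replicate (length x) 0" "replicate (length y) 0"] assms
    by (auto simp: remdups_adj_replicate)
  then have ne: "?C \<noteq> {}"
    by (auto simp: matching_path_def warping_paths_def)
  have "0 \<le> Min ?C"
    using Min_ge_iff[OF fin ne] path_cost_nonneg by auto
  then have "dtw x y = 0 \<longleftrightarrow> 0 \<in> ?C"
    unfolding dtw_def using Min_in[OF fin ne] Min_le[OF fin] by fastforce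
  also have "\<dots> \<longleftrightarrow> (\<exists>p \<in> ?W. path_cost x y p = 0)"
    by (metis (no_types, lifting) image_iff real_sqrt_eq_zero_cancel_iff)
  also have "\<dots> \<longleftrightarrow> (\<exists>p. matching_path x y p)"
    by (simp add: path_cost_eq_0_iff matching_path_def warping_paths_def)
  finally show ?thesis .
qed

theorem proposition2:
  fixes x :: "real list"
  assumes "time_series x"
  shows "{y. time_series y \<and> dtw x y = 0} = {y. time_series y \<and> expansion y (condensed x)}"
proof (rule Collect_cong)
  fix y
  have x: "x \<noteq> []"
    using assms by (simp add: time_series_def)
  have "dtw x y = 0 \<longleftrightarrow> expansion y (condensed x)" if y: "y \<noteq> []"
  proof -
    have "dtw x y = 0 \<longleftrightarrow> (\<exists>p. matching_path x y p)"
      by (rule dtw_eq_0_iff[OF x y])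
    also have "\<dots> \<longleftrightarrow> remdups_adj y = remdups_adj x"
      using matching_path_exists[OF x y] matching_path_remdups_adj_eq by metis
    also have "\<dots> \<longleftrightarrow> expansion y (condensed x)"
      by (simp add: condensed_def expansion_remdups_adj_iff)
    finally show ?thesis .
  qed
  then show "time_series y \<and> dtw x y = 0 \<longleftrightarrow> time_series y \<and> expansion y (condensed x)"
    unfolding time_series_def by blast
qed

end
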